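(* Let $f$, $f^{-1}$ be as in the context, and let $\Phi$ be a finite set of materials, each given by a Young's modulus $E>0$ and a density $\rho>0$. Fix a design domain of length $L>0$, height $h>0$ and imposed thickness $t>0$, a load $F>0$ and a maximal allowed deflection $\delta_{\max}>0$, and assume $tE\delta_{\max}/F\ge f(1)$ for every material $(E,\rho)\in\Phi$. For a material $(E,\rho)$ the minimal mass of a design meeting the deflection constraint is $M(E,\rho)=L\,h\,t\,\rho\,f^{-1}\!\left(\frac{tE\delta_{\max}}{F}\right)$. Let $(E_1,\rho_1)\in\Phi$ be a material with the lowest ratio $\rho/E$ in $\Phi$, and let $(E_2,\rho_2)\in\Phi$ be the optimal material, i.e. the material whose mass $M(E_2,\rho_2)$ (equivalently, whose index $\rho_2 f^{-1}(tE_2\delta_{\max}/F)$) is strictly smaller than that of every other material of $\Phi$. Then $\rho_2\ge\rho_1$.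
   Context: For a volume fraction $V_f\in(0,1]$ (ratio of design volume to design-domain volume), $f(V_f)$ denotes the globally optimal compliance attainable by a design of volume fraction $V_f$ in the given compliance topology optimization problem, computed for unit load, unit thickness and unit Young's modulus (the compliance--volume fraction Pareto front); for general load, thickness and modulus the compliance is $f(V_f)F^2/(tE)$ and the deflection at the load point is $f(V_f)F/(tE)$. Standing assumptions on $f$: $f$ is differentiable on $(0,1]$ with $f'<0$, $f(V_f)\to+\infty$ as $V_f\searrow0$, so $f$ is a bijection $(0,1]\to[f(1),+\infty[$ with decreasing inverse $f^{-1}$; and the efficiency ratio $n(V_f)=-V_f f'(V_f)/f(V_f)$ satisfies $n(V_f)\le 1$ for all $V_f\in(0,1]$. *)

theory Defs
  imports "HOL-Analysis.Analysis"
begin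

definition finv :: "(real \<Rightarrow> real) \<Rightarrow> real \<Rightarrow> real" where
  "finv f y = inv_into {0<..1} f y"

definition min_mass :: "(real \<Rightarrow> real) \<Rightarrow> real \<Rightarrow> real \<Rightarrow> real \<Rightarrow> real \<Rightarrow> real \<Rightarrow> real \<times> real \<Rightarrow> real" where
  "min_mass f L h t F dmax m = L * h * t * snd m * finv f (t * fst m * dmax / F)"

end

theory Submission
  imports Defs
begin

text \<open>Suppose the optimal material 2 were lighter than the material 1 of lowest specific
  density \<open>\<rho>/E\<close>. Then it is also less stiff, so with \<open>c = t dmax / F\<close> it needs the larger
  volume fraction \<open>V\<^sub>2 = f\<^sup>-\<^sup>1(c E\<^sub>2) \<ge> V\<^sub>1 = f\<^sup>-\<^sup>1(c E\<^sub>1)\<close>. The efficiency bound \<open>n \<le> 1\<close>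
  says exactly that \<open>V f(V)\<close> is nondecreasing, hence \<open>E\<^sub>1 V\<^sub>1 \<le> E\<^sub>2 V\<^sub>2\<close>; multiplying by
  \<open>\<rho>\<^sub>1/E\<^sub>1 \<le> \<rho>\<^sub>2/E\<^sub>2\<close> gives \<open>\<rho>\<^sub>1 V\<^sub>1 \<le> \<rho>\<^sub>2 V\<^sub>2\<close>, so material 1 is at least as light as
  material 2, contradicting the strict optimality of material 2.\<close>

definition material_index :: "(real \<Rightarrow> real) \<Rightarrow> real \<Rightarrow> real \<Rightarrow> real \<Rightarrow> real" where
  "material_index f c E \<rho> = \<rho> * finv f (c * E)"

lemma min_mass_eq_material_index:
  "min_mass f L h t F dmax (E, \<rho>) = L * h * t * material_index f (t * dmax / F) E \<rho>"
  by (simp add: min_mass_def material_index_def mult.commute mult.left_commute)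

locale pareto_front =
  fixes f f' :: "real \<Rightarrow> real"
  assumes deriv: "\<And>V. V \<in> {0<..1} \<Longrightarrow> (f has_real_derivative f' V) (at V within {0<..1})"
    and deriv_neg: "\<And>V. V \<in> {0<..1} \<Longrightarrow> f' V < 0"
    and pos: "\<And>V. V \<in> {0<..1} \<Longrightarrow> f V > 0"
    and efficiency_le_1: "\<And>V. V \<in> {0<..1} \<Longrightarrow> - V * f' V / f V \<le> 1"
    and bij: "bij_betw f {0<..1} {f 1..}"
begin

lemma has_real_derivative_at:
  assumes "V \<in> {0<..<1}"
  shows "(f has_real_derivative f' V) (at V)"
proof -
  have "at V within {0<..<1} = at V"
    using assms by (intro at_within_open) auto
  moreover have "(f has_real_derivative f' V) (at V within {0<..<1})"
    using assms by (intro has_field_derivative_subset[OF deriv]) auto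
  ultimately show ?thesis
    by simp
qed

lemma continuous_on_Icc:
  assumes "0 < a" "b \<le> 1"
  shows "continuous_on {a..b} f"
proof -
  have "continuous_on {0<..1} f"
    unfolding continuous_on_eq_continuous_within using deriv DERIV_continuous by blast
  then show ?thesis
    by (rule continuous_on_subset) (use assms in auto)
qed

lemma strict_antimono_on: "strict_antimono_on {0<..1} f"
proof (rule monotone_onI)
  fix a b :: real
  assume a: "a \<in> {0<..1}" and b: "b \<in> {0<..1}" and "a < b"
  show "f b < f a"
  proof (rule DERIV_neg_imp_decreasing_open[OF \<open>a < b\<close>])
    fix V
    assume "a < V" "V < b"
    with a b have "V \<in> {0<..1}" "V \<in> {0<..<1}"
      by auto
    then show "\<exists>y. (f has_real_derivative y) (at V) \<and> y < 0"
      using has_real_derivative_at deriv_neg by blast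
  next
    show "continuous_on {a..b} f"
      using a b by (intro continuous_on_Icc) auto
  qed
qed

lemma mono_on_times: "mono_on {0<..1} (\<lambda>V. V * f V)"
proof (rule mono_onI)
  fix a b :: real
  assume a: "a \<in> {0<..1}" and b: "b \<in> {0<..1}" and "a \<le> b"
  show "a * f a \<le> b * f b"
  proof (rule DERIV_nonneg_imp_increasing_open[OF \<open>a \<le> b\<close>])
    fix V
    assume "a < V" "V < b"
    with a b have V: "V \<in> {0<..1}" "V \<in> {0<..<1}"
      by auto
    have "- V * f' V \<le> f V"
      using efficiency_le_1[OF V(1)] pos[OF V(1)] by (simp add: pos_le_divide_eq)
    then have "f V + f' V * V \<ge> 0"
      by (simp add: algebra_simps)
    moreover have "((\<lambda>V. V * f V) has_real_derivative 1 * f V + f' V * V) (at V)"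
      by (intro DERIV_mult DERIV_ident has_real_derivative_at V(2))
    ultimately show "\<exists>y. ((\<lambda>V. V * f V) has_real_derivative y) (at V) \<and> y \<ge> 0"
      by auto
  next
    show "continuous_on {a..b} (\<lambda>V. V * f V)"
      using a b continuous_on_Icc by (intro continuous_intros) auto
  qed
qed

lemma image_eq: "f ` {0<..1} = {f 1..}"
  using bij by (simp add: bij_betw_def)

lemma finv_mem:
  assumes "f 1 \<le> y"
  shows "finv f y \<in> {0<..1}"
  unfolding finv_def using assms by (intro inv_into_into) (simp add: image_eq)

lemma f_finv:
  assumes "f 1 \<le> y"
  shows "f (finv f y) = y"
  unfolding finv_def using assms by (intro f_inv_into_f) (simp add: image_eq)

lemma finv_antimono:
  assumes "f 1 \<le> y" "y \<le> y'"
  shows "finv f y' \<le> finv f y"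
proof (rule ccontr)
  assume "\<not> finv f y' \<le> finv f y"
  then have "f (finv f y') < f (finv f y)"
    using assms finv_mem by (intro monotone_onD[OF strict_antimono_on]) auto
  with assms show False
    by (simp add: f_finv)
qed

lemma times_finv_antimono:
  assumes "f 1 \<le> y" "y \<le> y'"
  shows "y' * finv f y' \<le> y * finv f y"
proof -
  have "finv f y' * f (finv f y') \<le> finv f y * f (finv f y)"
    using assms finv_mem finv_antimono by (auto intro: mono_onD[OF mono_on_times])
  with assms show ?thesis
    by (simp add: f_finv mult.commute)
qed

lemma material_index_le:
  assumes "c > 0" "E\<^sub>2 > 0" "\<rho>\<^sub>1 \<ge> 0" "E\<^sub>2 \<le> E\<^sub>1" "f 1 \<le> c * E\<^sub>2"
    and specific: "\<rho>\<^sub>1 / E\<^sub>1 \<le> \<rho>\<^sub>2 / E\<^sub>2"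
  shows "material_index f c E\<^sub>1 \<rho>\<^sub>1 \<le> material_index f c E\<^sub>2 \<rho>\<^sub>2"
proof -
  define V\<^sub>1 V\<^sub>2 where "V\<^sub>1 = finv f (c * E\<^sub>1)" and "V\<^sub>2 = finv f (c * E\<^sub>2)"
  have "c * (E\<^sub>1 * V\<^sub>1) \<le> c * (E\<^sub>2 * V\<^sub>2)"
    using times_finv_antimono[of "c * E\<^sub>2" "c * E\<^sub>1"] assms
    by (simp add: V\<^sub>1_def V\<^sub>2_def mult.assoc)
  then have EV: "E\<^sub>1 * V\<^sub>1 \<le> E\<^sub>2 * V\<^sub>2"
    using \<open>c > 0\<close> by simp
  have "V\<^sub>2 > 0"
    using finv_mem[OF \<open>f 1 \<le> c * E\<^sub>2\<close>] by (simp add: V\<^sub>2_def)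
  have "\<rho>\<^sub>1 * V\<^sub>1 = (\<rho>\<^sub>1 / E\<^sub>1) * (E\<^sub>1 * V\<^sub>1)"
    using assms by simp
  also have "\<dots> \<le> (\<rho>\<^sub>1 / E\<^sub>1) * (E\<^sub>2 * V\<^sub>2)"
    using EV assms by (intro mult_left_mono) auto
  also have "\<dots> \<le> (\<rho>\<^sub>2 / E\<^sub>2) * (E\<^sub>2 * V\<^sub>2)"
    using specific \<open>E\<^sub>2 > 0\<close> \<open>V\<^sub>2 > 0\<close> by (intro mult_right_mono) auto
  also have "\<dots> = \<rho>\<^sub>2 * V\<^sub>2"
    using \<open>E\<^sub>2 > 0\<close> by simp
  finally show ?thesis
    by (simp add: material_index_def V\<^sub>1_def V\<^sub>2_def)
qed

end

theorem proposition1: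
  fixes f f' :: "real \<Rightarrow> real"
    and \<Phi> :: "(real \<times> real) set"
    and L h t F dmax E1 \<rho>1 E2 \<rho>2 :: real
  assumes f_deriv: "\<And>V. V \<in> {0<..1} \<Longrightarrow> (f has_real_derivative f' V) (at V within {0<..1})"
    and f'_neg: "\<And>V. V \<in> {0<..1} \<Longrightarrow> f' V < 0"
    and f_pos: "\<And>V. V \<in> {0<..1} \<Longrightarrow> f V > 0"
    and f_lim: "filterlim f at_top (at_right 0)"
    and f_bij: "bij_betw f {0<..1} {f 1..}"
    and n_le1: "\<And>V. V \<in> {0<..1} \<Longrightarrow> - V * f' V / f V \<le> 1"
    and \<Phi>_fin: "finite \<Phi>"
    and \<Phi>_pos: "\<And>E \<rho>. (E, \<rho>) \<in> \<Phi> \<Longrightarrow> E > 0 \<and> \<rho> > 0"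
    and L: "L > 0" and h: "h > 0" and t: "t > 0" and F: "F > 0" and dmax: "dmax > 0"
    and feas: "\<And>E \<rho>. (E, \<rho>) \<in> \<Phi> \<Longrightarrow> t * E * dmax / F \<ge> f 1"
    and m1: "(E1, \<rho>1) \<in> \<Phi>"
    and m1_min: "\<And>E \<rho>. (E, \<rho>) \<in> \<Phi> \<Longrightarrow> \<rho>1 / E1 \<le> \<rho> / E"
    and m2: "(E2, \<rho>2) \<in> \<Phi>"
    and m2_opt: "\<And>m. m \<in> \<Phi> \<Longrightarrow> m \<noteq> (E2, \<rho>2) \<Longrightarrow>
                    min_mass f L h t F dmax (E2, \<rho>2) < min_mass f L h t F dmax m"
  shows "\<rho>2 \<ge> \<rho>1"
proof (rule ccontr)
  assume "\<not> \<rho>2 \<ge> \<rho>1"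
  interpret pareto_front f f'
    using f_deriv f'_neg f_pos n_le1 f_bij by unfold_locales
  define c where "c = t * dmax / F"
  have "E1 > 0" "\<rho>1 > 0" "E2 > 0" "c > 0"
    using \<Phi>_pos[OF m1] \<Phi>_pos[OF m2] t dmax F by (auto simp: c_def)
  have specific: "\<rho>1 / E1 \<le> \<rho>2 / E2"
    using m1_min[OF m2] .
  then have "\<rho>1 * E2 \<le> \<rho>2 * E1"
    using \<open>E1 > 0\<close> \<open>E2 > 0\<close> by (simp add: divide_simps)
  also have "\<dots> < \<rho>1 * E1"
    using \<open>\<not> \<rho>2 \<ge> \<rho>1\<close> \<open>E1 > 0\<close> by simp
  finally have "E2 \<le> E1"
    using \<open>\<rho>1 > 0\<close> by simp
  moreover have "f 1 \<le> c * E2"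
    using feas[OF m2] by (simp add: c_def mult_ac)
  ultimately have "material_index f c E1 \<rho>1 \<le> material_index f c E2 \<rho>2"
    using specific \<open>E2 > 0\<close> \<open>\<rho>1 > 0\<close> \<open>c > 0\<close> by (intro material_index_le) auto
  then have "min_mass f L h t F dmax (E1, \<rho>1) \<le> min_mass f L h t F dmax (E2, \<rho>2)"
    using L h t by (simp add: min_mass_eq_material_index c_def)
  moreover have "(E1, \<rho>1) \<noteq> (E2, \<rho>2)"
    using \<open>\<not> \<rho>2 \<ge> \<rho>1\<close> by auto
  ultimately show False
    using m2_opt[OF m1] by simp
qed

end
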